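(* Let $G=(V,E)$ be a $\lambda$-expander graph, $l\ge1$ an integer, and $f:V\to\mathbb R_{\ge0}$ such that $\Pr_{v\sim U(V)}(f(v)\ge x)\le\exp(-x(\ln x)^3)$ for all real $x\ge 20$, and suppose $\lambda\le\exp(-l(\ln l)^3)$. Then \[ \Pr_{w\sim\mathrm{Walk}(G,l)}\Big(\textstyle\sum_{i\in[l]}f(w_i)\ge C\,l\Big)\le\exp(-l), \] where $C:=e^2+e^3+(e-1)$ (note $C\le 30$).
   Context: $[l]:=\{0,\dots,l-1\}$; $U(V)$ is the uniform distribution on $V$. Graphs are finite, undirected, may have parallel edges and self-loops; the adjacency matrix $A=(a_{uv})$ counts edges between $u$ and $v$; the graph is $d$-regular ($d\ge1$) if $A$ is symmetric with all row sums $d$; it is a $\lambda$-expander if it is $d$-regular and the second largest absolute value of the eigenvalues of $A$ (with multiplicity) is at most $d\lambda$. $\mathrm{Walk}(G,l)$ is the distribution of $w=(w_0,\dots,w_{l-1})$ where $w_0$ is uniform on $V$ and $w_{i+1}=u$ with probability $a_{w_iu}/d$ given the past. *)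

theory Defs
  imports "Jordan_Normal_Form.Char_Poly"
          "HOL-Computational_Algebra.Fundamental_Theorem_Algebra"
          "HOL-Probability.Probability_Mass_Function"
begin

text \<open>A finite (multi)graph on vertex set V = {0..<n}, given by its adjacency
  matrix a u v = number of edges between u and v (only entries with u, v < n matter).\<close>

definition adj_mat :: "nat \<Rightarrow> (nat \<Rightarrow> nat \<Rightarrow> nat) \<Rightarrow> complex Matrix.mat" where
  "adj_mat n a = Matrix.mat n n (\<lambda>(i, j). of_nat (a i j))"

definition regular_graph :: "nat \<Rightarrow> (nat \<Rightarrow> nat \<Rightarrow> nat) \<Rightarrow> nat \<Rightarrow> bool" where
  "regular_graph n a d \<longleftrightarrow> d \<ge> 1 \<and> (\<forall>u<n. \<forall>v<n. a u v = a v u)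
     \<and> (\<forall>u<n. (\<Sum>v<n. a u v) = d)"

definition eigenvalues_mset :: "complex Matrix.mat \<Rightarrow> complex multiset" where
  "eigenvalues_mset A = proots (char_poly A)"

text \<open>Second largest absolute value of the eigenvalues (with multiplicity) is at most d*lam:
  after removing one copy of the largest absolute value, all remaining ones are bounded
  (vacuous if there is only one eigenvalue).\<close>
definition expander :: "nat \<Rightarrow> (nat \<Rightarrow> nat \<Rightarrow> nat) \<Rightarrow> nat \<Rightarrow> real \<Rightarrow> bool" where
  "expander n a d lam \<longleftrightarrow> regular_graph n a d \<and>
     (let M = image_mset cmod (eigenvalues_mset (adj_mat n a))
      in \<forall>x \<in># M - {# Max_mset M #}. x \<le> real d * lam)"

definition walk_step :: "nat \<Rightarrow> (nat \<Rightarrow> nat \<Rightarrow> nat) \<Rightarrow> nat \<Rightarrow> nat \<Rightarrow> nat pmf" where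
  "walk_step n a d v = embed_pmf (\<lambda>u. if u < n then real (a v u) / real d else 0)"

text \<open>Walk(G,l): list [w_0,...,w_{l-1}], w_0 uniform on V (for l \<ge> 1).\<close>
fun walk_pmf :: "nat \<Rightarrow> (nat \<Rightarrow> nat \<Rightarrow> nat) \<Rightarrow> nat \<Rightarrow> nat \<Rightarrow> nat list pmf" where
  "walk_pmf n a d 0 = return_pmf []"
| "walk_pmf n a d (Suc 0) = map_pmf (\<lambda>v. [v]) (pmf_of_set {..<n})"
| "walk_pmf n a d (Suc (Suc k)) =
     bind_pmf (walk_pmf n a d (Suc k)) (\<lambda>w. map_pmf (\<lambda>u. w @ [u]) (walk_step n a d (last w)))"

end

theory Submission
  imports Defs "HOL-Analysis.L2_Norm" "HOL-Analysis.Complex_Transcendental"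
    "Jordan_Normal_Form.Schur_Decomposition"
begin

text \<open>Truncate \<open>f\<close> at \<open>l\<close>: a walk whose sum exceeds \<open>C l\<close> either visits a vertex with
  \<open>f \<ge> l\<close>, which by the tail bound and a union bound has probability about
  \<open>l exp (- l (ln l)\<^sup>3)\<close>, or has a large sum of \<open>g = min f l\<close>, which is handled by Markov's
  inequality for \<open>\<Prod>i exp (g w\<^sub>i)\<close>.  For any \<open>h\<close> with \<open>\<bar>h\<bar> \<le> H\<close> the expectation of
  \<open>\<Prod>i h w\<^sub>i\<close> is at most \<open>(\<parallel>h\<parallel>\<^sub>2 / \<surd>n + H \<lambda>)\<^sup>l\<close>: it is computed by alternately multiplying by \<open>h\<close>
  and applying the transition matrix, and each step sends the mean of the current vector to a
  constant (costing \<open>\<parallel>h\<parallel>\<^sub>2 / \<surd>n\<close>) and contracts the rest by \<open>\<lambda>\<close>.  The contraction comes from the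
  trace method: \<open>tr A\<^sup>2\<^sup>k = \<Sum>\<mu>\<^sup>2\<^sup>k \<le> d\<^sup>2\<^sup>k + n (d\<lambda>)\<^sup>2\<^sup>k\<close> bounds the Hilbert-Schmidt norm of
  \<open>(A/d)\<^sup>k - J/n\<close> by \<open>\<surd>n \<lambda>\<^sup>k\<close>, and letting \<open>k = 2\<^sup>j \<rightarrow> \<infinity>\<close> removes the factor \<open>\<surd>n\<close>.
  With \<open>h = exp g\<close> the tail bound gives \<open>\<parallel>h\<parallel>\<^sub>2 / \<surd>n \<le> e\<^sup>2\<^sup>0 + 1\<close> and the hypothesis on \<open>\<lambda>\<close>
  gives \<open>H \<lambda> = e\<^sup>l \<lambda> \<le> 1\<close>.\<close>

definition mat_trace :: "'a::comm_ring_1 mat \<Rightarrow> 'a" where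
  "mat_trace M = (\<Sum>i<dim_row M. M $$ (i, i))"

lemma mat_trace_mult_comm:
  assumes A: "A \<in> carrier_mat n m" and B: "B \<in> carrier_mat m n"
  shows "mat_trace (A * B) = mat_trace (B * A)"
proof -
  have "mat_trace (A * B) = (\<Sum>i<n. \<Sum>j<m. A $$ (i, j) * B $$ (j, i))"
    unfolding mat_trace_def using A B
    by (intro sum.cong refl) (auto simp: scalar_prod_def atLeast0LessThan)
  also have "\<dots> = (\<Sum>j<m. \<Sum>i<n. A $$ (i, j) * B $$ (j, i))" by (rule sum.swap)
  also have "\<dots> = mat_trace (B * A)"
    unfolding mat_trace_def using A B
    by (intro sum.cong refl) (auto simp: scalar_prod_def atLeast0LessThan mult.commute)
  finally show ?thesis .
qed

lemma upper_triangular_mult: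
  fixes A B :: "'a::comm_ring_1 mat"
  assumes A: "A \<in> carrier_mat n n" and B: "B \<in> carrier_mat n n"
    and uA: "upper_triangular A" and uB: "upper_triangular B"
  shows "upper_triangular (A * B)"
    and "i < n \<Longrightarrow> (A * B) $$ (i, i) = A $$ (i, i) * B $$ (i, i)"
proof -
  have prod: "(A * B) $$ (i, j) = (\<Sum>k<n. A $$ (i, k) * B $$ (k, j))" if "i < n" "j < n" for i j
    using A B that by (simp add: scalar_prod_def atLeast0LessThan)
  have zero: "A $$ (i, k) * B $$ (k, j) = 0"
    if "i < n" "k < n" "j < i \<or> (j = i \<and> k \<noteq> i)" for i j k
  proof (cases "k < i")
    case True
    then show ?thesis using uA A that by (simp add: upper_triangularD)
  next
    case False
    then have "j < k" using that by auto
    then show ?thesis using uB B that by (simp add: upper_triangularD)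
  qed
  show "upper_triangular (A * B)"
  proof (rule upper_triangularI)
    fix i j assume "j < i" "i < dim_row (A * B)"
    then show "(A * B) $$ (i, j) = 0" using A by (subst prod) (auto intro!: sum.neutral zero)
  qed
  show "(A * B) $$ (i, i) = A $$ (i, i) * B $$ (i, i)" if i: "i < n"
  proof -
    have "(A * B) $$ (i, i) = (\<Sum>k\<in>{i}. A $$ (i, k) * B $$ (k, i))"
      unfolding prod[OF i i] using i zero[OF i] by (intro sum.mono_neutral_right) auto
    then show ?thesis by simp
  qed
qed

lemma upper_triangular_pow:
  fixes C :: "'a::comm_ring_1 mat"
  assumes C: "C \<in> carrier_mat n n" and uC: "upper_triangular C"
  shows "upper_triangular (C ^\<^sub>m m) \<and> (\<forall>i<n. (C ^\<^sub>m m) $$ (i, i) = C $$ (i, i) ^ m)"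
proof (induction m)
  case 0
  show ?case using C by auto
next
  case (Suc m)
  have Cm: "C ^\<^sub>m m \<in> carrier_mat n n" using C by simp
  show ?case
    using Suc upper_triangular_mult[OF Cm C _ uC] by (simp add: mult.commute)
qed

lemma proots_prod_linear: "proots (\<Prod>x\<leftarrow>xs. [:- x, 1:]) = mset (xs :: 'a::idom list)"
proof -
  have nz: "0 \<notin> set (map (\<lambda>x. [:- x, 1:]) xs)" by auto
  have "proots (\<Prod>x\<leftarrow>xs. [:- x, 1:]) = (\<Sum>x\<leftarrow>xs. proots [:- x, 1:])"
    using proots_prod_list[OF nz] by (simp add: o_def)
  also have "\<dots> = mset xs"
    using proots_linear_factor[of "- _"] by (induction xs) simp_all
  finally show ?thesis .
qed

lemma trace_pow_eq_sum_eigenvalues: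
  fixes A :: "complex mat"
  assumes A: "A \<in> carrier_mat n n"
  shows "mat_trace (A ^\<^sub>m m) = (\<Sum>x\<in>#eigenvalues_mset A. x ^ m)"
    and "size (eigenvalues_mset A) = n"
proof -
  obtain es where cp: "char_poly A = (\<Prod>x\<leftarrow>es. [:- x, 1:])" and len: "length es = n"
    using char_poly_factorized[OF A] by blast
  obtain C P Q where sd: "schur_decomposition A es = (C, P, Q)"
    by (cases "schur_decomposition A es") auto
  from schur_decomposition[OF A cp sd]
  have sim: "similar_mat_wit A C P Q" and uC: "upper_triangular C" and dg: "diag_mat C = es"
    by auto
  from sim A have C: "C \<in> carrier_mat n n" and PQ: "P \<in> carrier_mat n n" "Q \<in> carrier_mat n n"
    and QP: "Q * P = 1\<^sub>m n"
    unfolding similar_mat_wit_def Let_def by auto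
  have eigs: "eigenvalues_mset A = mset es"
    unfolding eigenvalues_mset_def cp by (rule proots_prod_linear)
  then show "size (eigenvalues_mset A) = n" using len by simp
  have es: "es = map (\<lambda>i. C $$ (i, i)) [0..<n]" using dg C unfolding diag_mat_def by simp
  have "mat_trace (A ^\<^sub>m m) = mat_trace (P * (C ^\<^sub>m m * Q))"
    using similar_mat_wit_pow_id[OF sim] C PQ by (simp add: assoc_mult_mat[of _ n n _ n _ n])
  also have "\<dots> = mat_trace ((C ^\<^sub>m m * Q) * P)" using C PQ by (intro mat_trace_mult_comm) auto
  also have "(C ^\<^sub>m m * Q) * P = C ^\<^sub>m m"
    using C PQ QP by (simp add: assoc_mult_mat[of _ n n _ n _ n])
  also have "mat_trace (C ^\<^sub>m m) = (\<Sum>i<n. C $$ (i, i) ^ m)"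
    unfolding mat_trace_def using upper_triangular_pow[OF C uC] C by simp
  also have "\<dots> = (\<Sum>x\<in>#eigenvalues_mset A. x ^ m)"
    unfolding eigs es
    by (simp add: sum_unfold_sum_mset atLeast0LessThan multiset.map_comp o_def)
  finally show "mat_trace (A ^\<^sub>m m) = (\<Sum>x\<in>#eigenvalues_mset A. x ^ m)" .
qed

lemma le_of_pow2_le_const_mult:
  fixes x s c :: real
  assumes pow: "\<And>j. x ^ (2 ^ j) \<le> c * s ^ (2 ^ j)" and s: "0 \<le> s"
  shows "x \<le> s"
proof (rule ccontr)
  assume "\<not> x \<le> s"
  then have xs: "s < x" by simp
  show False
  proof (cases "s = 0")
    case True
    then show False using pow[of 0] xs by simp
  next
    case False
    then have s_pos: "s > 0" using s by simp
    define r where "r = x / s"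
    have r: "r > 1" unfolding r_def using xs s_pos by simp
    obtain M where M: "c < r ^ M" using real_arch_pow[OF r] by blast
    have "r ^ M \<le> r ^ (2 ^ M)" using r by (intro power_increasing) (auto intro: less_imp_le)
    also have "\<dots> = x ^ (2 ^ M) / s ^ (2 ^ M)" unfolding r_def by (simp add: power_divide)
    also have "\<dots> \<le> c" using pow[of M] s_pos by (simp add: divide_le_eq)
    finally show False using M by simp
  qed
qed

lemma L2_set_abs: "L2_set (\<lambda>x. \<bar>f x\<bar>) A = L2_set f A"
  unfolding L2_set_def by simp

lemma L2_set_scale: "L2_set (\<lambda>x. r * f x) A = \<bar>r\<bar> * L2_set f A"
  using L2_set_right_distrib[of "\<bar>r\<bar>" "\<lambda>x. \<bar>f x\<bar>" A] L2_set_abs[of f A]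
    L2_set_abs[of "\<lambda>x. r * f x" A]
  by (simp add: abs_mult)

lemma L2_set_mult_le:
  assumes "\<And>x. x \<in> A \<Longrightarrow> \<bar>c x\<bar> \<le> H"
  shows "L2_set (\<lambda>x. c x * f x) A \<le> H * L2_set f A"
proof (cases "A = {}")
  case False
  then have H: "0 \<le> H" using assms by (meson abs_ge_zero all_not_in_conv order.trans)
  have "L2_set (\<lambda>x. c x * f x) A = L2_set (\<lambda>x. \<bar>c x\<bar> * \<bar>f x\<bar>) A"
    using L2_set_abs[of "\<lambda>x. c x * f x" A] by (simp add: abs_mult)
  also have "\<dots> \<le> L2_set (\<lambda>x. H * \<bar>f x\<bar>) A"
    using assms by (intro L2_set_mono mult_right_mono) auto
  also have "\<dots> = H * L2_set f A"
    using L2_set_right_distrib[OF H, of "\<lambda>x. \<bar>f x\<bar>" A] L2_set_abs[of f A] by simp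
  finally show ?thesis .
qed simp

lemma abs_sum_le_L2_set: "\<bar>\<Sum>x\<in>A. f x\<bar> \<le> sqrt (real (card A)) * L2_set f A"
proof -
  have "\<bar>\<Sum>x\<in>A. f x\<bar> \<le> (\<Sum>x\<in>A. \<bar>f x\<bar> * \<bar>1\<bar>)" by (simp add: sum_abs)
  also have "\<dots> \<le> L2_set f A * L2_set (\<lambda>_. 1) A" by (rule L2_set_mult_ineq)
  finally show ?thesis by (simp add: L2_set_constant mult.commute)
qed

lemma norm_sum_mset_le:
  fixes f :: "'a \<Rightarrow> 'b::real_normed_vector"
  shows "norm (\<Sum>x\<in>#E. f x) \<le> (\<Sum>x\<in>#E. norm (f x))"
  by (induction E) (auto intro: order.trans[OF norm_triangle_ineq])

lemma sum_mset_pow_le: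
  fixes M :: "real multiset"
  assumes M: "M \<noteq> {#}" and bounds: "\<forall>x\<in>#M. 0 \<le> x \<and> x \<le> D"
    and rest: "\<forall>x\<in>#M - {#Max_mset M#}. x \<le> b" and b: "0 \<le> b"
  shows "(\<Sum>x\<in>#M. x ^ m) \<le> D ^ m + real (size M) * b ^ m"
proof -
  define mx where "mx = Max_mset M"
  have mx: "mx \<in># M" unfolding mx_def using M by (rule Max_in_mset)
  have "M = add_mset mx (M - {#mx#})" using mx by simp
  then have "(\<Sum>x\<in>#M. x ^ m) = mx ^ m + (\<Sum>x\<in>#M - {#mx#}. x ^ m)"
    by (metis image_mset_add_mset sum_mset.insert)
  also have "\<dots> \<le> D ^ m + real (size (M - {#mx#})) * b ^ m"
  proof (rule add_mono)
    show "mx ^ m \<le> D ^ m" using bounds mx by (intro power_mono) auto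
    have "x ^ m \<le> b ^ m" if "x \<in># M - {#mx#}" for x
      using that rest bounds in_diffD[OF that] unfolding mx_def by (intro power_mono) auto
    then show "(\<Sum>x\<in>#M - {#mx#}. x ^ m) \<le> real (size (M - {#mx#})) * b ^ m"
      using sum_mset_mono[of "M - {#mx#}" "\<lambda>x. x ^ m" "\<lambda>_. b ^ m"] by simp
  qed
  also have "\<dots> \<le> D ^ m + real (size M) * b ^ m"
    using b by (intro add_left_mono mult_right_mono) (auto simp: size_Diff1_le)
  finally show ?thesis .
qed

locale regular_multigraph =
  fixes n d :: nat and a :: "nat \<Rightarrow> nat \<Rightarrow> nat"
  assumes n_pos: "n > 0" and regular: "regular_graph n a d"
begin

lemma d_pos: "real d > 0"
  using regular unfolding regular_graph_def by auto

lemma adj_sym: "u < n \<Longrightarrow> v < n \<Longrightarrow> a u v = a v u"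
  using regular unfolding regular_graph_def by auto

lemma adj_row_sum: "u < n \<Longrightarrow> (\<Sum>v<n. real (a u v)) = real d"
  using regular unfolding regular_graph_def by (metis of_nat_sum)

lemma adj_col_sum: "v < n \<Longrightarrow> (\<Sum>u<n. real (a u v)) = real d"
  using adj_row_sum[of v] adj_sym[of _ v] by (metis (no_types, lifting) lessThan_iff sum.cong)

lemma set_pmf_uniform [simp]: "set_pmf (pmf_of_set {..<n}) = {..<n}"
  using n_pos by (subst set_pmf_of_set) auto

lemma prob_uniform: "measure_pmf.prob (pmf_of_set {..<n}) S = real (card (S \<inter> {..<n})) / real n"
  using n_pos by (subst measure_pmf_of_set) (auto simp: Int_commute)

definition trans_prob :: "nat \<Rightarrow> nat \<Rightarrow> real" where
  "trans_prob u v = real (a u v) / real d"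

lemma trans_prob_row_sum: "u < n \<Longrightarrow> (\<Sum>v<n. trans_prob u v) = 1"
  unfolding trans_prob_def using adj_row_sum d_pos by (simp flip: sum_divide_distrib)

lemma trans_prob_col_sum: "v < n \<Longrightarrow> (\<Sum>u<n. trans_prob u v) = 1"
  unfolding trans_prob_def using adj_col_sum d_pos by (simp flip: sum_divide_distrib)

lemma pmf_walk_step:
  assumes "v < n"
  shows "pmf (walk_step n a d v) u = (if u < n then trans_prob v u else 0)"
proof -
  let ?p = "\<lambda>u. if u < n then real (a v u) / real d else 0"
  have "(\<integral>\<^sup>+x. ennreal (?p x) \<partial>count_space UNIV) = (\<Sum>x<n. ennreal (?p x))"
    by (rule nn_integral_count_space') auto
  also have "\<dots> = ennreal (\<Sum>x<n. ?p x)" by (rule sum_ennreal) simp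
  also have "(\<Sum>x<n. ?p x) = 1" using trans_prob_row_sum[OF assms] unfolding trans_prob_def by simp
  finally show ?thesis unfolding walk_step_def trans_prob_def by (subst pmf_embed_pmf) auto
qed

lemma set_pmf_walk_step: "v < n \<Longrightarrow> set_pmf (walk_step n a d v) \<subseteq> {..<n}"
  using pmf_walk_step by (auto simp: set_pmf_eq)

lemma set_pmf_walk: "set_pmf (walk_pmf n a d m) \<subseteq> {w. set w \<subseteq> {..<n} \<and> length w = m}"
proof (cases m)
  case (Suc k)
  have "set_pmf (walk_pmf n a d (Suc k)) \<subseteq> {w. set w \<subseteq> {..<n} \<and> length w = Suc k}"
  proof (induction k)
    case (Suc k)
    show ?case
    proof
      fix x assume "x \<in> set_pmf (walk_pmf n a d (Suc (Suc k)))"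
      then obtain w u where w: "w \<in> set_pmf (walk_pmf n a d (Suc k))"
        and u: "u \<in> set_pmf (walk_step n a d (last w))" and x: "x = w @ [u]" by auto
      from w Suc have ws: "set w \<subseteq> {..<n}" "length w = Suc k" by auto
      then have "last w < n" by (metis last_in_set list.size(3) nat.distinct(1) lessThan_iff subsetD)
      then show "x \<in> {w. set w \<subseteq> {..<n} \<and> length w = Suc (Suc k)}"
        using set_pmf_walk_step u ws x by auto
    qed
  qed auto
  then show ?thesis using Suc by simp
qed simp

lemma finite_set_pmf_walk: "finite (set_pmf (walk_pmf n a d m))"
  by (rule finite_subset[OF set_pmf_walk finite_lists_length_eq]) simp

definition step_push :: "(nat \<Rightarrow> real) \<Rightarrow> nat \<Rightarrow> real" where
  "step_push y v = (\<Sum>u<n. y u * trans_prob u v)"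

text \<open>\<open>walk_weight h (Suc k) v\<close> is \<open>n\<close> times the expectation of
  \<open>\<Prod>i<Suc k. h i (w!i)\<close> restricted to the walks ending in \<open>v\<close>.\<close>

fun walk_weight :: "(nat \<Rightarrow> nat \<Rightarrow> real) \<Rightarrow> nat \<Rightarrow> nat \<Rightarrow> real" where
  "walk_weight h 0 v = 1"
| "walk_weight h (Suc 0) v = h 0 v"
| "walk_weight h (Suc (Suc k)) v = h (Suc k) v * step_push (walk_weight h (Suc k)) v"

lemma expectation_walk_step:
  assumes "v < n"
  shows "measure_pmf.expectation (walk_step n a d v) g = (\<Sum>u<n. trans_prob v u * g u)"
  using assms set_pmf_walk_step[OF assms]
  by (subst integral_measure_pmf_real[where A = "{..<n}"]) (auto simp: pmf_walk_step mult.commute)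

lemma expectation_walk_Suc_Suc:
  "measure_pmf.expectation (walk_pmf n a d (Suc (Suc k))) F =
   measure_pmf.expectation (walk_pmf n a d (Suc k))
     (\<lambda>w. \<Sum>u<n. trans_prob (last w) u * F (w @ [u]))"
proof -
  let ?p = "walk_pmf n a d (Suc k)"
  have last: "last w < n" if "w \<in> set_pmf ?p" for w
  proof -
    have "set w \<subseteq> {..<n}" "w \<noteq> []" using that set_pmf_walk[of "Suc k"] by auto
    then show ?thesis using last_in_set by blast
  qed
  have fin: "finite (set_pmf (map_pmf (\<lambda>u. w @ [u]) (walk_step n a d (last w))))"
    if "w \<in> set_pmf ?p" for w
    using finite_subset[OF set_pmf_walk_step[OF last[OF that]]] by simp
  have "measure_pmf.expectation (walk_pmf n a d (Suc (Suc k))) F =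
      (\<Sum>w\<in>set_pmf ?p. pmf ?p w *\<^sub>R
         measure_pmf.expectation (map_pmf (\<lambda>u. w @ [u]) (walk_step n a d (last w))) F)"
    unfolding walk_pmf.simps by (rule pmf_expectation_bind[OF finite_set_pmf_walk fin order_refl])
  also have "\<dots> = (\<Sum>w\<in>set_pmf ?p. pmf ?p w *\<^sub>R (\<Sum>u<n. trans_prob (last w) u * F (w @ [u])))"
    using last by (intro sum.cong refl) (simp add: expectation_walk_step)
  also have "\<dots> = measure_pmf.expectation ?p (\<lambda>w. \<Sum>u<n. trans_prob (last w) u * F (w @ [u]))"
    by (rule integral_measure_pmf[OF finite_set_pmf_walk, symmetric]) auto
  finally show ?thesis .
qed

lemma expectation_walk_prod:
  "measure_pmf.expectation (walk_pmf n a d (Suc k)) (\<lambda>w. (\<Prod>i<Suc k. h i (w!i)) * g (last w))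
   = (\<Sum>v<n. walk_weight h (Suc k) v * g v) / n"
proof (induction k arbitrary: g)
  case 0
  have "measure_pmf.expectation (walk_pmf n a d (Suc 0)) (\<lambda>w. (\<Prod>i<Suc 0. h i (w!i)) * g (last w))
      = measure_pmf.expectation (pmf_of_set {..<n}) (\<lambda>v. h 0 v * g v)"
    by (simp add: integral_map_pmf)
  then show ?case using n_pos by (subst (asm) integral_pmf_of_set) auto
next
  case (Suc k)
  define g' where "g' x = (\<Sum>u<n. trans_prob x u * h (Suc k) u * g u)" for x
  have extend: "(\<Sum>u<n. trans_prob (last w) u * ((\<Prod>i<Suc (Suc k). h i ((w @ [u])!i)) * g (last (w @ [u]))))
      = (\<Prod>i<Suc k. h i (w!i)) * g' (last w)" if "length w = Suc k" for w
  proof -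
    have "(\<Prod>i<Suc (Suc k). h i ((w @ [u])!i)) = (\<Prod>i<Suc k. h i (w!i)) * h (Suc k) u" for u
      using that by (simp add: nth_append)
    then show ?thesis unfolding g'_def by (simp add: sum_distrib_left mult_ac)
  qed
  have "measure_pmf.expectation (walk_pmf n a d (Suc (Suc k)))
      (\<lambda>w. (\<Prod>i<Suc (Suc k). h i (w!i)) * g (last w))
      = measure_pmf.expectation (walk_pmf n a d (Suc k)) (\<lambda>w. (\<Prod>i<Suc k. h i (w!i)) * g' (last w))"
    unfolding expectation_walk_Suc_Suc using set_pmf_walk[of "Suc k"] extend
    by (intro integral_cong_AE) (auto simp: AE_measure_pmf_iff)
  also have "\<dots> = (\<Sum>v<n. walk_weight h (Suc k) v * g' v) / n" by (rule Suc)
  also have "(\<Sum>v<n. walk_weight h (Suc k) v * g' v)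
      = (\<Sum>v<n. \<Sum>u<n. walk_weight h (Suc k) v * trans_prob v u * h (Suc k) u * g u)"
    unfolding g'_def by (simp add: sum_distrib_left mult.assoc)
  also have "\<dots> = (\<Sum>u<n. \<Sum>v<n. walk_weight h (Suc k) v * trans_prob v u * h (Suc k) u * g u)"
    by (rule sum.swap)
  also have "\<dots> = (\<Sum>u<n. walk_weight h (Suc (Suc k)) u * g u)"
    by (simp add: step_push_def sum_distrib_left sum_distrib_right mult_ac)
  finally show ?case .
qed

lemma walk_weight_after_ones:
  assumes "\<And>j v. j < i \<Longrightarrow> v < n \<Longrightarrow> h j v = 1" and "v < n"
  shows "walk_weight h (Suc i) v = h i v"
  using assms
proof (induction i arbitrary: v)
  case (Suc i)
  have "walk_weight h (Suc i) u = 1" if "u < n" for u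
    using Suc.IH[OF _ that] Suc.prems(1) that by simp
  then have "step_push (walk_weight h (Suc i)) v = 1"
    unfolding step_push_def using trans_prob_col_sum[OF Suc.prems(2)] by simp
  then show ?case by simp
qed simp

lemma sum_walk_weight_before_ones:
  assumes ones: "\<And>j v. i < j \<Longrightarrow> v < n \<Longrightarrow> h j v = 1"
  shows "(\<Sum>v<n. walk_weight h (Suc (i + t)) v) = (\<Sum>v<n. walk_weight h (Suc i) v)"
proof (induction t)
  case (Suc t)
  have "(\<Sum>v<n. walk_weight h (Suc (i + Suc t)) v)
      = (\<Sum>v<n. step_push (walk_weight h (Suc (i + t))) v)"
    using ones by (intro sum.cong) auto
  also have "\<dots> = (\<Sum>u<n. walk_weight h (Suc (i + t)) u)"
    unfolding step_push_def using trans_prob_row_sum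
    by (subst sum.swap) (simp flip: sum_distrib_left)
  finally show ?case using Suc by simp
qed simp

lemma prob_walk_nth:
  assumes "i < l"
  shows "measure_pmf.prob (walk_pmf n a d l) {w. w!i \<in> S} = measure_pmf.prob (pmf_of_set {..<n}) S"
proof -
  obtain k where l: "l = Suc k" using assms by (cases l) auto
  define h where "h j v = (if j = i then indicator S v else (1::real))" for j v
  have "(\<Sum>v<n. walk_weight h (Suc k) v) = (\<Sum>v<n. walk_weight h (Suc i) v)"
    using sum_walk_weight_before_ones[of i h "k - i"] assms l by (simp add: h_def)
  also have "\<dots> = (\<Sum>v<n. indicator S v)"
    using walk_weight_after_ones[of i h] by (intro sum.cong) (auto simp: h_def)
  also have "\<dots> = real (card (S \<inter> {..<n}))"
    by (simp add: indicator_def sum.If_cases Int_commute)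
  finally have sum_weight: "(\<Sum>v<n. walk_weight h (Suc k) v) = real (card (S \<inter> {..<n}))" .
  have "(\<lambda>w. (\<Prod>j<Suc k. h j (w!j)) * 1) = indicator {w. w!i \<in> S}"
    using assms l by (auto simp: h_def prod.delta indicator_def)
  then have "measure_pmf.prob (walk_pmf n a d l) {w. w!i \<in> S} =
      measure_pmf.expectation (walk_pmf n a d (Suc k)) (\<lambda>w. (\<Prod>j<Suc k. h j (w!j)) * 1)"
    using l by simp
  also have "\<dots> = real (card (S \<inter> {..<n})) / real n"
    using expectation_walk_prod[of k h "\<lambda>_. 1"] sum_weight by simp
  finally show ?thesis by (simp add: prob_uniform)
qed

lemma prob_walk_some_nth_le:
  "measure_pmf.prob (walk_pmf n a d l) {w. \<exists>i<l. w!i \<in> S}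
   \<le> real l * measure_pmf.prob (pmf_of_set {..<n}) S"
proof -
  have "{w. \<exists>i<l. w!i \<in> S} = (\<Union>i<l. {w. w!i \<in> S})" by auto
  then have "measure_pmf.prob (walk_pmf n a d l) {w. \<exists>i<l. w!i \<in> S}
      \<le> (\<Sum>i<l. measure_pmf.prob (walk_pmf n a d l) {w. w!i \<in> S})"
    by (simp only:) (rule measure_pmf.finite_measure_subadditive_finite, auto)
  also have "\<dots> = real l * measure_pmf.prob (pmf_of_set {..<n}) S"
    by (simp add: prob_walk_nth)
  finally show ?thesis .
qed

lemma prob_walk_sum_ge_le:
  "measure_pmf.prob (walk_pmf n a d l) {w. (\<Sum>i<l. g (w!i)) \<ge> c}
   \<le> exp (- c) * measure_pmf.expectation (walk_pmf n a d l) (\<lambda>w. \<Prod>i<l. exp (g (w!i)))"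
proof -
  let ?p = "walk_pmf n a d l"
  have "measure_pmf.prob ?p {w. (\<Sum>i<l. g (w!i)) \<ge> c}
      = measure_pmf.expectation ?p (indicator {w. (\<Sum>i<l. g (w!i)) \<ge> c} :: nat list \<Rightarrow> real)"
    by simp
  also have "\<dots> \<le> measure_pmf.expectation ?p (\<lambda>w. exp (- c) * (\<Prod>i<l. exp (g (w!i))))"
  proof (rule integral_mono)
    fix w
    have "exp (- c) * (\<Prod>i<l. exp (g (w!i))) = exp ((\<Sum>i<l. g (w!i)) - c)"
      by (simp add: exp_sum exp_diff exp_minus field_simps)
    then show "(indicator {w. (\<Sum>i<l. g (w!i)) \<ge> c} w :: real) \<le> exp (- c) * (\<Prod>i<l. exp (g (w!i)))"
      by (auto simp: indicator_def)
  qed (auto intro!: integrable_measure_pmf_finite finite_set_pmf_walk)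
  also have "\<dots> = exp (- c) * measure_pmf.expectation ?p (\<lambda>w. \<Prod>i<l. exp (g (w!i)))"
    by (rule integral_mult_right_zero)
  finally show ?thesis .
qed

fun walk_count :: "nat \<Rightarrow> nat \<Rightarrow> nat \<Rightarrow> real" where
  "walk_count 0 u v = (if u = v then 1 else 0)"
| "walk_count (Suc m) u v = (\<Sum>w<n. walk_count m u w * real (a w v))"

lemma walk_count_one:
  assumes "u < n"
  shows "walk_count 1 u v = real (a u v)"
proof -
  have "walk_count 1 u v = (\<Sum>w<n. if w = u then real (a u v) else 0)"
    unfolding One_nat_def walk_count.simps by (intro sum.cong) auto
  then show ?thesis using assms by simp
qed

lemma walk_count_add:
  "v < n \<Longrightarrow> walk_count (j + m) u v = (\<Sum>w<n. walk_count j u w * walk_count m w v)"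
proof (induction m arbitrary: v)
  case 0
  then show ?case by (simp add: if_distrib sum.delta cong: if_cong)
next
  case (Suc m)
  have "walk_count (j + Suc m) u v = (\<Sum>x<n. (\<Sum>w<n. walk_count j u w * walk_count m w x) * real (a x v))"
    using Suc.IH by (auto intro: sum.cong)
  also have "\<dots> = (\<Sum>w<n. \<Sum>x<n. walk_count j u w * (walk_count m w x * real (a x v)))"
    by (subst sum.swap) (simp add: sum_distrib_right sum_distrib_left mult.assoc)
  also have "\<dots> = (\<Sum>w<n. walk_count j u w * walk_count (Suc m) w v)"
    by (simp add: sum_distrib_left)
  finally show ?case .
qed

lemma walk_count_sym: "u < n \<Longrightarrow> v < n \<Longrightarrow> walk_count m u v = walk_count m v u"
proof (induction m arbitrary: u v)
  case (Suc m)
  have "walk_count (Suc m) u v = (\<Sum>w<n. real (a u w) * walk_count m w v)"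
    using walk_count_add[of v 1 m u] walk_count_one[OF Suc.prems(1)] Suc.prems by simp
  also have "\<dots> = walk_count (Suc m) v u"
    using Suc adj_sym by (auto intro!: sum.cong simp: mult.commute)
  finally show ?case .
qed simp

lemma walk_count_row_sum: "u < n \<Longrightarrow> (\<Sum>v<n. walk_count m u v) = real d ^ m"
proof (induction m)
  case (Suc m)
  have "(\<Sum>v<n. walk_count (Suc m) u v) = (\<Sum>w<n. \<Sum>v<n. walk_count m u w * real (a w v))"
    by (simp only: walk_count.simps) (rule sum.swap)
  also have "\<dots> = (\<Sum>w<n. walk_count m u w * (\<Sum>v<n. real (a w v)))"
    by (simp add: sum_distrib_left)
  also have "\<dots> = real d ^ Suc m"
    using Suc adj_row_sum by (simp add: sum_distrib_right[symmetric])
  finally show ?case .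
qed (simp add: sum.delta cong: if_cong)

lemma walk_count_col_sum: "v < n \<Longrightarrow> (\<Sum>u<n. walk_count m u v) = real d ^ m"
  using walk_count_row_sum[of v m] walk_count_sym[of _ v m] by (metis (no_types, lifting) lessThan_iff sum.cong)

lemma adj_mat_carrier: "adj_mat n a \<in> carrier_mat n n"
  unfolding adj_mat_def by simp

lemma adj_mat_pow_entry:
  "u < n \<Longrightarrow> v < n \<Longrightarrow> (adj_mat n a ^\<^sub>m m) $$ (u, v) = complex_of_real (walk_count m u v)"
proof (induction m arbitrary: v)
  case (Suc m)
  have "(adj_mat n a ^\<^sub>m Suc m) $$ (u, v)
      = (\<Sum>k<n. (adj_mat n a ^\<^sub>m m) $$ (u, k) * adj_mat n a $$ (k, v))"
    using Suc.prems adj_mat_carrier by (simp add: scalar_prod_def atLeast0LessThan)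
  also have "\<dots> = (\<Sum>k<n. complex_of_real (walk_count m u k * real (a k v)))"
    using Suc by (intro sum.cong refl) (auto simp: adj_mat_def)
  finally show ?case by (simp only: of_real_sum walk_count.simps)
qed (use adj_mat_carrier in simp)

lemma adj_mat_eigenvalue_le:
  assumes "\<mu> \<in># eigenvalues_mset (adj_mat n a)"
  shows "cmod \<mu> \<le> real d"
proof -
  let ?A = "adj_mat n a"
  have "poly (char_poly ?A) \<mu> = 0"
    using assms unfolding eigenvalues_mset_def by (cases "char_poly ?A = 0") auto
  then have "eigenvalue ?A \<mu>" using eigenvalue_root_char_poly[OF adj_mat_carrier] by simp
  then obtain x where x: "x \<in> carrier_vec n" "x \<noteq> 0\<^sub>v n" "?A *\<^sub>v x = \<mu> \<cdot>\<^sub>v x"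
    unfolding eigenvalue_def eigenvector_def using adj_mat_carrier by auto
  obtain i where i: "i < n" "cmod (x $ i) = Max ((\<lambda>j. cmod (x $ j)) ` {..<n})"
  proof -
    have "Max ((\<lambda>j. cmod (x $ j)) ` {..<n}) \<in> (\<lambda>j. cmod (x $ j)) ` {..<n}"
      using n_pos by (intro Max_in) auto
    then show thesis using that by auto
  qed
  have i_max: "cmod (x $ j) \<le> cmod (x $ i)" if "j < n" for j
    unfolding i(2) using that by (intro Max_ge) auto
  have "cmod (x $ i) > 0"
  proof (rule ccontr)
    assume "\<not> ?thesis"
    then have "x $ j = 0" if "j < n" for j
      using i_max[OF that] by (smt (verit) norm_ge_zero norm_le_zero_iff)
    then have "x = 0\<^sub>v n" using x(1) by (intro eq_vecI) auto
    then show False using x(2) by simp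
  qed
  have "\<mu> * x $ i = (\<Sum>j<n. of_nat (a i j) * x $ j)"
  proof -
    have "(?A *\<^sub>v x) $ i = (\<Sum>j<n. of_nat (a i j) * x $ j)"
      using i(1) x(1) adj_mat_carrier by (simp add: scalar_prod_def atLeast0LessThan adj_mat_def)
    then show ?thesis using x(3) i(1) x(1) by simp
  qed
  then have "cmod \<mu> * cmod (x $ i) = cmod (\<Sum>j<n. of_nat (a i j) * x $ j)"
    by (metis norm_mult)
  also have "\<dots> \<le> (\<Sum>j<n. real (a i j) * cmod (x $ j))"
    by (rule order.trans[OF norm_sum]) (simp add: norm_mult)
  also have "\<dots> \<le> (\<Sum>j<n. real (a i j) * cmod (x $ i))"
    using i_max by (intro sum_mono mult_left_mono) auto
  also have "\<dots> = real d * cmod (x $ i)" using adj_row_sum[OF i(1)] by (simp flip: sum_distrib_right)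
  finally show ?thesis using \<open>cmod (x $ i) > 0\<close> by simp
qed

lemma sum_walk_count_diag_le:
  assumes "expander n a d lam"
  shows "(\<Sum>u<n. walk_count m u u) \<le> real d ^ m + real n * (real d * max lam 0) ^ m"
proof -
  let ?A = "adj_mat n a"
  define M where "M = image_mset cmod (eigenvalues_mset ?A)"
  have "complex_of_real (\<Sum>u<n. walk_count m u u) = mat_trace (?A ^\<^sub>m m)"
    using adj_mat_carrier adj_mat_pow_entry by (simp add: mat_trace_def of_real_sum)
  also have "\<dots> = (\<Sum>x\<in>#eigenvalues_mset ?A. x ^ m)"
    by (rule trace_pow_eq_sum_eigenvalues(1)[OF adj_mat_carrier])
  finally have "(\<Sum>u<n. walk_count m u u) \<le> cmod (\<Sum>x\<in>#eigenvalues_mset ?A. x ^ m)"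
    by (metis abs_ge_self norm_of_real)
  also have "\<dots> \<le> (\<Sum>x\<in>#M. x ^ m)"
    using norm_sum_mset_le[of "\<lambda>x. x ^ m" "eigenvalues_mset ?A"]
    unfolding M_def by (simp add: multiset.map_comp o_def norm_power)
  also have "\<dots> \<le> real d ^ m + real (size M) * (real d * max lam 0) ^ m"
  proof (rule sum_mset_pow_le)
    show "M \<noteq> {#}"
      using trace_pow_eq_sum_eigenvalues(2)[OF adj_mat_carrier] n_pos unfolding M_def by auto
    show "\<forall>x\<in>#M. 0 \<le> x \<and> x \<le> real d" unfolding M_def using adj_mat_eigenvalue_le by auto
    have "x \<le> real d * max lam 0" if "x \<le> real d * lam" for x
      using that d_pos by (smt (verit) mult_left_mono max.cobounded1 of_nat_0_le_iff)
    then show "\<forall>x\<in>#M - {#Max_mset M#}. x \<le> real d * max lam 0"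
      using assms unfolding expander_def Let_def M_def by auto
  qed simp
  also have "size M = n"
    using trace_pow_eq_sum_eigenvalues(2)[OF adj_mat_carrier] unfolding M_def by simp
  finally show ?thesis .
qed

text \<open>\<open>dev m\<close> is the matrix \<open>(A/d)\<^sup>m - J/n\<close>, the \<open>m\<close>-step transition matrix minus its
  stationary part.\<close>

definition dev :: "nat \<Rightarrow> nat \<Rightarrow> nat \<Rightarrow> real" where
  "dev m u v = walk_count m u v / real d ^ m - 1 / real n"

lemma dev_sym: "u < n \<Longrightarrow> v < n \<Longrightarrow> dev m u v = dev m v u"
  unfolding dev_def using walk_count_sym by simp

lemma sum_dev_mult:
  assumes "u < n" "v < n"
  shows "(\<Sum>w<n. dev j u w * dev m w v) = dev (j + m) u v"
proof -
  have pos: "real d ^ j > 0" "real d ^ m > 0" "real n > 0" using d_pos n_pos by auto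
  have "dev j u w * dev m w v = walk_count j u w * walk_count m w v / (real d ^ j * real d ^ m)
     - walk_count j u w / (real d ^ j * real n) - walk_count m w v / (real d ^ m * real n)
     + 1 / (real n * real n)" for w
    unfolding dev_def using pos by (simp add: field_simps)
  then have "(\<Sum>w<n. dev j u w * dev m w v) =
     (\<Sum>w<n. walk_count j u w * walk_count m w v) / (real d ^ j * real d ^ m)
     - (\<Sum>w<n. walk_count j u w) / (real d ^ j * real n)
     - (\<Sum>w<n. walk_count m w v) / (real d ^ m * real n) + real n * (1 / (real n * real n))"
    by (simp add: sum.distrib sum_subtractf sum_divide_distrib)
  also have "\<dots> = dev (j + m) u v"
    unfolding dev_def walk_count_add[OF assms(2), symmetric] walk_count_row_sum[OF assms(1)]
      walk_count_col_sum[OF assms(2)]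
    using pos d_pos by (simp add: field_simps power_add)
  finally show ?thesis .
qed

lemma sum_sq_dev:
  "(\<Sum>u<n. \<Sum>v<n. (dev k u v)\<^sup>2) = (\<Sum>u<n. walk_count (2 * k) u u) / real d ^ (2 * k) - 1"
proof -
  have "(\<Sum>u<n. \<Sum>v<n. (dev k u v)\<^sup>2) = (\<Sum>u<n. \<Sum>v<n. dev k u v * dev k v u)"
    using dev_sym by (intro sum.cong) (auto simp: power2_eq_square)
  also have "\<dots> = (\<Sum>u<n. dev (2 * k) u u)"
    using sum_dev_mult by (intro sum.cong) (auto simp: mult_2)
  also have "\<dots> = (\<Sum>u<n. walk_count (2 * k) u u) / real d ^ (2 * k) - 1"
    unfolding dev_def using n_pos by (simp add: sum_subtractf sum_divide_distrib)
  finally show ?thesis .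
qed

definition dev_apply :: "nat \<Rightarrow> (nat \<Rightarrow> real) \<Rightarrow> nat \<Rightarrow> real" where
  "dev_apply m y v = (\<Sum>u<n. y u * dev m u v)"

definition sqnorm :: "(nat \<Rightarrow> real) \<Rightarrow> real" where
  "sqnorm y = (\<Sum>u<n. (y u)\<^sup>2)"

lemma sqnorm_nonneg: "sqnorm y \<ge> 0"
  unfolding sqnorm_def by (simp add: sum_nonneg)

lemma sqnorm_dev_apply: "sqnorm (dev_apply m y) = (\<Sum>u<n. y u * dev_apply (2 * m) y u)"
proof -
  have "sqnorm (dev_apply m y) = (\<Sum>v<n. \<Sum>u<n. \<Sum>u'<n. y u * y u' * (dev m u v * dev m v u'))"
    unfolding sqnorm_def dev_apply_def power2_eq_square using dev_sym
    by (intro sum.cong refl) (auto simp: sum_product mult_ac)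
  also have "\<dots> = (\<Sum>u<n. \<Sum>u'<n. \<Sum>v<n. y u * y u' * (dev m u v * dev m v u'))"
    by (subst sum.swap) (intro sum.cong refl sum.swap)
  also have "\<dots> = (\<Sum>u<n. \<Sum>u'<n. y u * y u' * dev (2 * m) u u')"
    using sum_dev_mult by (intro sum.cong refl) (auto simp: sum_distrib_left[symmetric] mult_2)
  also have "\<dots> = (\<Sum>u<n. y u * dev_apply (2 * m) y u)"
    unfolding dev_apply_def using dev_sym by (intro sum.cong refl) (auto simp: sum_distrib_left mult_ac)
  finally show ?thesis .
qed

lemma sqnorm_dev_apply_le: "sqnorm (dev_apply m y) \<le> (\<Sum>u<n. \<Sum>v<n. (dev m u v)\<^sup>2) * sqnorm y"
proof -
  have "sqnorm (dev_apply m y) \<le> (\<Sum>v<n. sqnorm y * (\<Sum>u<n. (dev m u v)\<^sup>2))"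
    unfolding sqnorm_def dev_apply_def by (intro sum_mono Cauchy_Schwarz_ineq_sum)
  also have "\<dots> = sqnorm y * (\<Sum>v<n. \<Sum>u<n. (dev m u v)\<^sup>2)"
    by (rule sum_distrib_left[symmetric])
  also have "\<dots> = (\<Sum>v<n. \<Sum>u<n. (dev m u v)\<^sup>2) * sqnorm y"
    by (rule mult.commute)
  also have "(\<Sum>v<n. \<Sum>u<n. (dev m u v)\<^sup>2) = (\<Sum>u<n. \<Sum>v<n. (dev m u v)\<^sup>2)"
    by (rule sum.swap)
  finally show ?thesis .
qed

lemma sqnorm_dev_apply_sq_le: "(sqnorm (dev_apply m y))\<^sup>2 \<le> sqnorm y * sqnorm (dev_apply (2 * m) y)"
  unfolding sqnorm_dev_apply[of m] unfolding sqnorm_def by (rule Cauchy_Schwarz_ineq_sum)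

lemma sqnorm_dev_apply_pow2_le:
  "(sqnorm (dev_apply 1 y)) ^ (2 ^ j) \<le> (sqnorm y) ^ (2 ^ j - 1) * sqnorm (dev_apply (2 ^ j) y)"
proof (induction j)
  case (Suc j)
  have "(sqnorm (dev_apply 1 y)) ^ (2 ^ Suc j) = ((sqnorm (dev_apply 1 y)) ^ (2 ^ j))\<^sup>2"
    by (simp add: power_mult[symmetric] mult.commute)
  also have "\<dots> \<le> ((sqnorm y) ^ (2 ^ j - 1) * sqnorm (dev_apply (2 ^ j) y))\<^sup>2"
    using Suc sqnorm_nonneg by (intro power_mono) auto
  also have "\<dots> = (sqnorm y) ^ ((2 ^ j - 1) * 2) * (sqnorm (dev_apply (2 ^ j) y))\<^sup>2"
    by (simp add: power_mult_distrib power_mult)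
  also have "\<dots> \<le> (sqnorm y) ^ ((2 ^ j - 1) * 2) * (sqnorm y * sqnorm (dev_apply (2 * 2 ^ j) y))"
    using sqnorm_dev_apply_sq_le sqnorm_nonneg by (intro mult_left_mono) auto
  also have "\<dots> = (sqnorm y) ^ ((2 ^ j - 1) * 2 + 1) * sqnorm (dev_apply (2 ^ Suc j) y)"
    by simp
  also have "(2 ^ j - 1) * 2 + 1 = (2::nat) ^ Suc j - 1"
  proof -
    have "t \<ge> 1 \<Longrightarrow> (t - 1) * 2 + 1 = 2 * t - 1" for t :: nat by arith
    then show ?thesis using one_le_power[of "2::nat" j] by simp
  qed
  finally show ?case .
qed simp

lemma sqnorm_dev_apply_le_of_trace_le:
  assumes lam: "lam \<ge> 0"
    and trace: "\<And>k. (\<Sum>u<n. walk_count (2 * k) u u) \<le> real d ^ (2 * k) + real n * (real d * lam) ^ (2 * k)"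
  shows "sqnorm (dev_apply 1 y) \<le> lam\<^sup>2 * sqnorm y"
proof (rule le_of_pow2_le_const_mult)
  fix j :: nat
  have hs: "(\<Sum>u<n. \<Sum>v<n. (dev k u v)\<^sup>2) \<le> real n * lam ^ (2 * k)" for k
  proof -
    have dk: "real d ^ (2 * k) > 0" using d_pos by simp
    have "(\<Sum>u<n. walk_count (2 * k) u u) / real d ^ (2 * k) - 1
        \<le> (real d ^ (2 * k) + real n * (real d * lam) ^ (2 * k)) / real d ^ (2 * k) - 1"
      using trace[of k] dk by (intro diff_right_mono divide_right_mono) auto
    also have "\<dots> = real n * lam ^ (2 * k)"
      using dk d_pos by (simp add: power_mult_distrib field_simps)
    finally show ?thesis unfolding sum_sq_dev .
  qed
  have "(sqnorm (dev_apply 1 y)) ^ (2 ^ j) \<le> (sqnorm y) ^ (2 ^ j - 1) * sqnorm (dev_apply (2 ^ j) y)"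
    by (rule sqnorm_dev_apply_pow2_le)
  also have "\<dots> \<le> (sqnorm y) ^ (2 ^ j - 1) * ((real n * lam ^ (2 * 2 ^ j)) * sqnorm y)"
    by (intro mult_left_mono order.trans[OF sqnorm_dev_apply_le] mult_right_mono hs)
      (auto simp: sqnorm_nonneg)
  also have "\<dots> = real n * (lam ^ (2 * 2 ^ j) * ((sqnorm y) ^ (2 ^ j - 1) * sqnorm y))"
    by (simp add: mult_ac)
  also have "(sqnorm y) ^ (2 ^ j - 1) * sqnorm y = (sqnorm y) ^ (2 ^ j)"
    by (metis One_nat_def Suc_pred pos2 power_Suc2 zero_less_power)
  also have "lam ^ (2 * 2 ^ j) * (sqnorm y) ^ (2 ^ j) = (lam\<^sup>2 * sqnorm y) ^ (2 ^ j)"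
    by (simp add: power_mult power_mult_distrib)
  finally show "(sqnorm (dev_apply 1 y)) ^ (2 ^ j) \<le> real n * (lam\<^sup>2 * sqnorm y) ^ (2 ^ j)" .
qed (use sqnorm_nonneg in simp)

lemma sqnorm_dev_apply_le_expander:
  "expander n a d lam \<Longrightarrow> sqnorm (dev_apply 1 y) \<le> (max lam 0)\<^sup>2 * sqnorm y"
  by (rule sqnorm_dev_apply_le_of_trace_le) (use sum_walk_count_diag_le in auto)

abbreviation norm2 :: "(nat \<Rightarrow> real) \<Rightarrow> real" where
  "norm2 y \<equiv> L2_set y {..<n}"

lemma norm2_eq_sqrt_sqnorm: "norm2 y = sqrt (sqnorm y)"
  unfolding L2_set_def sqnorm_def by simp

lemma step_push_eq:
  assumes "v < n"
  shows "step_push y v = (\<Sum>u<n. y u) / real n + dev_apply 1 y v"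
proof -
  have "y u * dev 1 u v = y u * trans_prob u v - y u / real n" if "u < n" for u
    unfolding dev_def walk_count_one[OF that] trans_prob_def by (simp add: right_diff_distrib)
  then have "dev_apply 1 y v = (\<Sum>u<n. y u * trans_prob u v - y u / real n)"
    unfolding dev_apply_def by (intro sum.cong) auto
  then show ?thesis unfolding step_push_def by (simp add: sum_subtractf sum_divide_distrib)
qed

end

locale spectral_expander = regular_multigraph +
  fixes lam :: real
  assumes lam_nonneg: "0 \<le> lam"
    and sqnorm_dev_apply_contract: "sqnorm (dev_apply 1 y) \<le> lam\<^sup>2 * sqnorm y"
begin

lemma norm2_dev_apply_le: "norm2 (dev_apply 1 y) \<le> lam * norm2 y"
  using real_sqrt_le_mono[OF sqnorm_dev_apply_contract[of y]] lam_nonneg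
  by (simp add: norm2_eq_sqrt_sqnorm real_sqrt_mult)

text \<open>Multiplying by \<open>h\<close> and taking one step: the mean of \<open>y\<close> is spread uniformly,
  which costs \<open>norm2 h / sqrt n\<close>, and the rest is contracted by \<open>lam\<close>.\<close>

lemma norm2_mult_step_push_le:
  assumes h: "\<forall>v<n. \<bar>h v\<bar> \<le> H"
  shows "norm2 (\<lambda>v. h v * step_push y v) \<le> (norm2 h / sqrt (real n) + H * lam) * norm2 y"
proof -
  define m where "m = (\<Sum>u<n. y u) / real n"
  have sn: "sqrt (real n) > 0" using n_pos by simp
  have m: "\<bar>m\<bar> \<le> norm2 y / sqrt (real n)"
  proof -
    have "\<bar>m\<bar> = \<bar>\<Sum>u<n. y u\<bar> / (sqrt (real n) * sqrt (real n))"
      unfolding m_def using n_pos by simp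
    also have "\<dots> \<le> (sqrt (real n) * norm2 y) / (sqrt (real n) * sqrt (real n))"
      using abs_sum_le_L2_set[of y "{..<n}"] by (intro divide_right_mono) auto
    also have "\<dots> = norm2 y / sqrt (real n)"
      by (rule mult_divide_mult_cancel_left) (use sn in simp)
    finally show ?thesis .
  qed
  have "norm2 (\<lambda>v. h v * step_push y v) = norm2 (\<lambda>v. m * h v + h v * dev_apply 1 y v)"
    unfolding m_def using step_push_eq by (intro L2_set_cong) (auto simp: algebra_simps)
  also have "\<dots> \<le> \<bar>m\<bar> * norm2 h + H * norm2 (dev_apply 1 y)"
    using L2_set_triangle_ineq[of "\<lambda>v. m * h v" "\<lambda>v. h v * dev_apply 1 y v" "{..<n}"]
      L2_set_mult_le[of "{..<n}" h H "dev_apply 1 y"] h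
    by (simp add: L2_set_scale)
  also have "\<dots> \<le> norm2 y / sqrt (real n) * norm2 h + H * (lam * norm2 y)"
    using h n_pos m norm2_dev_apply_le
    by (intro add_mono mult_right_mono mult_left_mono) (auto intro: order.trans[OF abs_ge_zero])
  finally show ?thesis by (simp add: algebra_simps)
qed

lemma norm2_walk_weight_le:
  assumes h: "\<forall>v<n. \<bar>h v\<bar> \<le> H"
  shows "norm2 (walk_weight (\<lambda>_. h) (Suc k)) \<le> sqrt (real n) * (norm2 h / sqrt (real n) + H * lam) ^ Suc k"
proof (induction k)
  have H: "H \<ge> 0" using h n_pos by (meson abs_ge_zero order.trans)
  case 0
  have "norm2 h \<le> sqrt (real n) * (norm2 h / sqrt (real n) + H * lam)"
    using n_pos H lam_nonneg by (simp add: distrib_left)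
  then show ?case by (simp cong: L2_set_cong)
next
  case (Suc k)
  have "walk_weight (\<lambda>_. h) (Suc (Suc k)) = (\<lambda>v. h v * step_push (walk_weight (\<lambda>_. h) (Suc k)) v)"
    by auto
  then have "norm2 (walk_weight (\<lambda>_. h) (Suc (Suc k)))
      \<le> (norm2 h / sqrt (real n) + H * lam) * norm2 (walk_weight (\<lambda>_. h) (Suc k))"
    using norm2_mult_step_push_le[OF h] by simp
  also have "\<dots> \<le> (norm2 h / sqrt (real n) + H * lam) * (sqrt (real n) * (norm2 h / sqrt (real n) + H * lam) ^ Suc k)"
    using Suc h n_pos lam_nonneg
    by (intro mult_left_mono) (auto intro!: add_nonneg_nonneg mult_nonneg_nonneg intro: order.trans[OF abs_ge_zero])
  finally show ?case by (simp del: walk_weight.simps add: mult_ac)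
qed

lemma expectation_walk_prod_le:
  assumes h: "\<forall>v<n. \<bar>h v\<bar> \<le> H"
  shows "measure_pmf.expectation (walk_pmf n a d (Suc k)) (\<lambda>w. \<Prod>i<Suc k. h (w!i))
     \<le> (norm2 h / sqrt (real n) + H * lam) ^ Suc k"
proof -
  have sn: "sqrt (real n) > 0" using n_pos by simp
  have "measure_pmf.expectation (walk_pmf n a d (Suc k)) (\<lambda>w. \<Prod>i<Suc k. h (w!i))
      = (\<Sum>v<n. walk_weight (\<lambda>_. h) (Suc k) v) / real n"
    using expectation_walk_prod[of k "\<lambda>_. h" "\<lambda>_. 1"] by simp
  also have "\<dots> \<le> sqrt (real n) * norm2 (walk_weight (\<lambda>_. h) (Suc k)) / real n"
    using abs_sum_le_L2_set[of "walk_weight (\<lambda>_. h) (Suc k)" "{..<n}"]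
    by (intro divide_right_mono) auto
  also have "\<dots> \<le> sqrt (real n) * (sqrt (real n) * (norm2 h / sqrt (real n) + H * lam) ^ Suc k) / real n"
    using sn by (intro divide_right_mono mult_left_mono norm2_walk_weight_le[OF h]) auto
  also have "\<dots> = (norm2 h / sqrt (real n) + H * lam) ^ Suc k"
    using n_pos by (simp add: mult.assoc[symmetric])
  finally show ?thesis .
qed

end

lemma (in regular_multigraph) spectral_expander_max:
  assumes "expander n a d lam"
  shows "spectral_expander n d a (max lam 0)"
  using sqnorm_dev_apply_le_expander[OF assms] by unfold_locales (simp_all add: One_nat_def)

lemma exp1_gt: "exp (1::real) > 2.7"
  using e_approx_32 by (simp add: abs_if split: if_split_asm)

lemma exp_2_plus_exp_3_plus_e_minus_1_ge_24: "exp 2 + exp 3 + (exp 1 - 1) \<ge> (24::real)"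
proof -
  have e2: "exp (2::real) = exp 1 * exp 1" and e3: "exp (3::real) = exp 1 * exp 1 * exp 1"
    by (simp_all flip: exp_add)
  have "exp (1::real) * exp 1 \<ge> 2.7 * 2.7" using exp1_gt by (intro mult_mono) auto
  moreover have "exp (1::real) * exp 1 * exp 1 \<ge> 2.7 * 2.7 * 2.7"
    using exp1_gt calculation by (intro mult_mono) auto
  ultimately show ?thesis using exp1_gt unfolding e2 e3 by simp
qed

lemma ln_cube_ge_8:
  assumes "x \<ge> (20::real)"
  shows "(ln x) ^ 3 \<ge> 8"
proof -
  have "exp (2::real) \<le> 20"
    using e_less_272 mult_mono[of "exp 1" "2.72" "exp 1" "2.72::real"] by (simp flip: exp_add)
  then have "ln x \<ge> 2" using assms by (subst ln_ge_iff) auto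
  then have "(2::real) ^ 3 \<le> (ln x) ^ 3" by (intro power_mono) auto
  then show ?thesis by simp
qed

lemma exp_superexp_le: "x \<ge> (20::real) \<Longrightarrow> exp (- x * (ln x) ^ 3) \<le> exp (- 8 * x)"
  using ln_cube_ge_8[of x] by (simp add: mult_left_mono)

lemma short_walk_num:
  assumes "1 \<le> l" "l < 20"
  shows "real l * exp (- 20 * (ln 20) ^ 3) \<le> exp (- real l)"
proof -
  have "real l * exp (- 20 * (ln 20) ^ 3) \<le> real l * exp (- 160)"
    using exp_superexp_le[of 20] by (intro mult_left_mono) auto
  also have "\<dots> \<le> exp (160 - real l) * exp (- 160)"
    using assms exp_ge_add_one_self[of "160 - real l"] by (intro mult_right_mono) auto
  finally show ?thesis by (simp flip: exp_add)
qed

lemma long_walk_num: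
  assumes "real l \<ge> 20"
  shows "real l * exp (- real l * (ln (real l)) ^ 3) + exp (- 3 * real l) \<le> exp (- real l)"
proof -
  have "2 * real l * exp (- real l * (ln (real l)) ^ 3) \<le> exp (7 * real l) * exp (- 8 * real l)"
  proof (rule mult_mono)
    show "2 * real l \<le> exp (7 * real l)" using exp_ge_add_one_self[of "7 * real l"] by linarith
  qed (use exp_superexp_le[OF assms] in auto)
  moreover have "2 \<le> exp (2 * real l)" using exp_ge_add_one_self[of "2 * real l"] assms by linarith
  then have "2 * exp (- 3 * real l) \<le> exp (2 * real l) * exp (- 3 * real l)"
    by (intro mult_right_mono) auto
  ultimately show ?thesis by (simp flip: exp_add)
qed

lemma exp_mult_pow_le:
  assumes c: "c \<ge> (24::real)" and r: "0 \<le> r" "r \<le> exp 20 + 2"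
  shows "exp (- c * real l) * r ^ l \<le> exp (- 3 * real l)"
proof -
  have "exp 20 + 2 \<le> exp (21::real)"
    using exp1_gt exp_ge_add_one_self[of "20::real"] mult_right_mono[of 2 "exp 1" "exp (20::real)"]
    by (simp flip: exp_add)
  also have "\<dots> \<le> exp (c - 3)" using c by simp
  finally have "exp (- c) * r \<le> exp (- c) * exp (c - 3)" using r by (intro mult_left_mono) auto
  then have "(exp (- c) * r) ^ l \<le> exp (- 3) ^ l"
    using r by (intro power_mono) (auto simp flip: exp_add)
  then show ?thesis by (simp add: power_mult_distrib mult.commute flip: exp_of_nat_mult)
qed

lemma sum_exp_layers_le: "(\<Sum>j\<in>{20..l}. exp (2 * real j + 2) * exp (- 8 * real j)) \<le> (2::real)"
proof -
  have "exp (2 * real j + 2) * exp (- 8 * real j) \<le> (1/2) ^ j" if "j \<ge> 1" for j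
  proof -
    have "exp (2 * real j + 2) * exp (- 8 * real j) \<le> exp (- real j)"
      using that by (simp flip: exp_add)
    also have "\<dots> = exp (-1) ^ j" by (simp flip: exp_of_nat_mult)
    also have "\<dots> \<le> (1/2) ^ j"
      using exp1_gt by (intro power_mono) (auto simp: exp_minus field_simps)
    finally show ?thesis .
  qed
  then have "(\<Sum>j\<in>{20..l}. exp (2 * real j + 2) * exp (- 8 * real j)) \<le> (\<Sum>j\<in>{20..l}. (1/2) ^ j)"
    by (intro sum_mono) auto
  also have "\<dots> \<le> (\<Sum>j<Suc l. (1/2::real) ^ j)" by (intro sum_mono2) auto
  also have "\<dots> \<le> 2" by (subst sum_gp_strict) simp
  finally show ?thesis .
qed

text \<open>Layer-cake bound for a truncated exponential: the layer \<open>j \<le> x < j + 1\<close>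
  contributes at most \<open>exp (2 * j + 2)\<close>.\<close>

lemma exp_min_sq_le_layers:
  "(exp (min x (real l)))\<^sup>2 \<le> exp 40 + (\<Sum>j\<in>{20..l}. exp (2 * real j + 2) * of_bool (real j \<le> x))"
proof -
  define m where "m = min x (real l)"
  have layers: "0 \<le> (\<Sum>j\<in>{20..l}. exp (2 * real j + 2) * of_bool (real j \<le> x))"
    by (intro sum_nonneg) auto
  show ?thesis
  proof (cases "m < 20")
    case True
    then have "(exp m)\<^sup>2 \<le> exp 40" by (simp flip: exp_double)
    then show ?thesis using layers unfolding m_def by simp
  next
    case False
    define j where "j = nat \<lfloor>m\<rfloor>"
    have "20 \<le> m" "m \<le> x" "m \<le> real l" using False unfolding m_def by auto
    then have j: "j \<in> {20..l}" and "real j \<le> m" "m < real j + 1"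
      unfolding j_def by (auto simp: le_nat_floor nat_le_iff floor_le_iff)
    then have "(exp m)\<^sup>2 \<le> exp (2 * real j + 2) * of_bool (real j \<le> x)"
      using \<open>m \<le> x\<close> by (auto simp flip: exp_double)
    also have "\<dots> \<le> (\<Sum>j\<in>{20..l}. exp (2 * real j + 2) * of_bool (real j \<le> x))"
      by (rule member_le_sum[OF j]) auto
    finally show ?thesis unfolding m_def by (smt (verit) exp_gt_zero)
  qed
qed

context regular_multigraph
begin

definition superexp_tail :: "(nat \<Rightarrow> real) \<Rightarrow> bool" where
  "superexp_tail f \<longleftrightarrow> (\<forall>x::real. x \<ge> 20 \<longrightarrow>
     measure_pmf.prob (pmf_of_set {..<n}) {v. f v \<ge> x} \<le> exp (- x * (ln x) ^ 3))"

lemma count_ge_le: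
  assumes "superexp_tail f" "j \<ge> (20::nat)"
  shows "(\<Sum>v<n. of_bool (real j \<le> f v)) \<le> real n * exp (- 8 * real j)"
proof -
  have "(\<Sum>v<n. of_bool (real j \<le> f v)) = real n * measure_pmf.prob (pmf_of_set {..<n}) {v. f v \<ge> real j}"
    using n_pos by (simp add: prob_uniform of_bool_def sum.If_cases Int_commute)
  also have "\<dots> \<le> real n * exp (- 8 * real j)"
  proof (rule mult_left_mono)
    have "measure_pmf.prob (pmf_of_set {..<n}) {v. f v \<ge> real j} \<le> exp (- real j * (ln (real j)) ^ 3)"
      using assms unfolding superexp_tail_def by simp
    also have "\<dots> \<le> exp (- 8 * real j)" using assms by (intro exp_superexp_le) simp
    finally show "measure_pmf.prob (pmf_of_set {..<n}) {v. f v \<ge> real j} \<le> exp (- 8 * real j)" .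
  qed simp
  finally show ?thesis .
qed

lemma sum_sq_exp_min_le:
  assumes tail: "superexp_tail f"
  shows "(\<Sum>v<n. (exp (min (f v) (real l)))\<^sup>2) \<le> real n * (exp 40 + 2)"
proof -
  have "(\<Sum>v<n. (exp (min (f v) (real l)))\<^sup>2)
      \<le> (\<Sum>v<n. exp 40 + (\<Sum>j\<in>{20..l}. exp (2 * real j + 2) * of_bool (real j \<le> f v)))"
    by (intro sum_mono exp_min_sq_le_layers)
  also have "\<dots> = real n * exp 40 + (\<Sum>v<n. \<Sum>j\<in>{20..l}. exp (2 * real j + 2) * of_bool (real j \<le> f v))"
    by (simp only: sum.distrib) simp
  also have "\<dots> = real n * exp 40 + (\<Sum>j\<in>{20..l}. exp (2 * real j + 2) * (\<Sum>v<n. of_bool (real j \<le> f v)))"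
    by (subst sum.swap) (simp only: sum_distrib_left)
  also have "\<dots> \<le> real n * exp 40 + (\<Sum>j\<in>{20..l}. exp (2 * real j + 2) * (real n * exp (- 8 * real j)))"
    using count_ge_le[OF tail] by (intro add_left_mono sum_mono mult_left_mono) auto
  also have "\<dots> = real n * (exp 40 + (\<Sum>j\<in>{20..l}. exp (2 * real j + 2) * exp (- 8 * real j)))"
    by (simp add: sum_distrib_left algebra_simps)
  also have "\<dots> \<le> real n * (exp 40 + 2)"
    using sum_exp_layers_le by (intro mult_left_mono add_left_mono) auto
  finally show ?thesis .
qed

lemma norm2_exp_min_le:
  assumes "superexp_tail f"
  shows "norm2 (\<lambda>v. exp (min (f v) (real l))) / sqrt (real n) \<le> exp 20 + 1"
proof -
  have "norm2 (\<lambda>v. exp (min (f v) (real l))) / sqrt (real n)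
      = sqrt ((\<Sum>v<n. (exp (min (f v) (real l)))\<^sup>2) / real n)"
    unfolding L2_set_def by (simp add: real_sqrt_divide)
  also have "\<dots> \<le> sqrt (exp 40 + 2)"
    using sum_sq_exp_min_le[OF assms, of l] n_pos
    by (intro real_sqrt_le_mono) (simp add: divide_le_eq mult.commute)
  also have "\<dots> \<le> sqrt ((exp 20 + 1)\<^sup>2)"
    using exp_ge_add_one_self[of "20::real"]
    by (intro real_sqrt_le_mono) (simp add: power2_eq_square algebra_simps flip: exp_add)
  finally show ?thesis by simp
qed

lemma prob_walk_sum_ge_short:
  assumes tail: "superexp_tail f" and l: "1 \<le> l" "l < 20" and c: "c \<ge> 20"
  shows "measure_pmf.prob (walk_pmf n a d l) {w. (\<Sum>i<l. f (w ! i)) \<ge> c * real l} \<le> exp (- real l)"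
proof -
  have "{w. (\<Sum>i<l. f (w ! i)) \<ge> c * real l} \<subseteq> {w. \<exists>i<l. w ! i \<in> {v. f v \<ge> 20}}"
  proof (intro subsetI CollectI, rule ccontr)
    fix w assume w: "w \<in> {w. (\<Sum>i<l. f (w ! i)) \<ge> c * real l}" and "\<not> (\<exists>i<l. w ! i \<in> {v. f v \<ge> 20})"
    moreover have "{..<l} \<noteq> {}" using l by (simp add: lessThan_empty_iff)
    ultimately have "(\<Sum>i<l. f (w ! i)) < (\<Sum>i<l. 20)" by (intro sum_strict_mono) auto
    also have "\<dots> \<le> c * real l" using c mult_right_mono[OF c, of "real l"] by simp
    finally show False using w by simp
  qed
  then have "measure_pmf.prob (walk_pmf n a d l) {w. (\<Sum>i<l. f (w ! i)) \<ge> c * real l}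
      \<le> real l * measure_pmf.prob (pmf_of_set {..<n}) {v. f v \<ge> 20}"
    by (intro order.trans[OF measure_pmf.finite_measure_mono prob_walk_some_nth_le]) auto
  also have "\<dots> \<le> real l * exp (- 20 * (ln 20) ^ 3)"
    using tail unfolding superexp_tail_def by (intro mult_left_mono) auto
  also have "\<dots> \<le> exp (- real l)" using l by (rule short_walk_num)
  finally show ?thesis .
qed

end

context spectral_expander
begin

lemma expectation_walk_prod_exp_min_le:
  assumes tail: "superexp_tail f" and lam: "lam \<le> exp (- real l)" and "l \<ge> 1"
  shows "measure_pmf.expectation (walk_pmf n a d l) (\<lambda>w. \<Prod>i<l. exp (min (f (w ! i)) (real l)))
     \<le> (exp 20 + 2) ^ l"
proof -
  obtain k where k: "l = Suc k" using \<open>l \<ge> 1\<close> by (cases l) auto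
  let ?h = "\<lambda>v. exp (min (f v) (real l))"
  have "measure_pmf.expectation (walk_pmf n a d l) (\<lambda>w. \<Prod>i<l. ?h (w ! i))
      \<le> (norm2 ?h / sqrt (real n) + exp (real l) * lam) ^ l"
    using expectation_walk_prod_le[of ?h "exp (real l)" k] k by simp
  also have "\<dots> \<le> (exp 20 + 2) ^ l"
  proof (rule power_mono)
    have "exp (real l) * lam \<le> exp (real l) * exp (- real l)" using lam by simp
    then show "norm2 ?h / sqrt (real n) + exp (real l) * lam \<le> exp 20 + 2"
      using norm2_exp_min_le[OF tail, of l] by (simp flip: exp_add)
    show "0 \<le> norm2 ?h / sqrt (real n) + exp (real l) * lam" using lam_nonneg by simp
  qed
  finally show ?thesis .
qed

lemma prob_walk_sum_ge_long:
  assumes tail: "superexp_tail f" and l: "real l \<ge> 20"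
    and lam: "lam \<le> exp (- real l * (ln (real l)) ^ 3)" and c: "c \<ge> 24"
  shows "measure_pmf.prob (walk_pmf n a d l) {w. (\<Sum>i<l. f (w ! i)) \<ge> c * real l} \<le> exp (- real l)"
proof -
  let ?p = "walk_pmf n a d l"
  let ?g = "\<lambda>v. min (f v) (real l)"
  have "{w. (\<Sum>i<l. f (w ! i)) \<ge> c * real l}
      \<subseteq> {w. \<exists>i<l. w ! i \<in> {v. f v \<ge> real l}} \<union> {w. (\<Sum>i<l. ?g (w ! i)) \<ge> c * real l}"
  proof
    fix w assume w: "w \<in> {w. (\<Sum>i<l. f (w ! i)) \<ge> c * real l}"
    show "w \<in> {w. \<exists>i<l. w ! i \<in> {v. f v \<ge> real l}} \<union> {w. (\<Sum>i<l. ?g (w ! i)) \<ge> c * real l}"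
    proof (cases "\<exists>i<l. f (w ! i) \<ge> real l")
      case False
      then have "(\<Sum>i<l. ?g (w ! i)) = (\<Sum>i<l. f (w ! i))" by (intro sum.cong) auto
      then show ?thesis using w by simp
    qed simp
  qed
  then have "measure_pmf.prob ?p {w. (\<Sum>i<l. f (w ! i)) \<ge> c * real l}
      \<le> measure_pmf.prob ?p {w. \<exists>i<l. w ! i \<in> {v. f v \<ge> real l}}
        + measure_pmf.prob ?p {w. (\<Sum>i<l. ?g (w ! i)) \<ge> c * real l}"
    by (intro order.trans[OF measure_pmf.finite_measure_mono measure_Un_le]) auto
  also have "measure_pmf.prob ?p {w. \<exists>i<l. w ! i \<in> {v. f v \<ge> real l}}
      \<le> real l * exp (- real l * (ln (real l)) ^ 3)"
    using tail l unfolding superexp_tail_def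
    by (intro order.trans[OF prob_walk_some_nth_le] mult_left_mono) auto
  also have "measure_pmf.prob ?p {w. (\<Sum>i<l. ?g (w ! i)) \<ge> c * real l}
      \<le> exp (- (c * real l)) * (exp 20 + 2) ^ l"
  proof -
    have "lam \<le> exp (- real l)"
      using lam l exp_superexp_le[OF l] by (smt (verit) exp_le_cancel_iff of_nat_0_le_iff)
    then show ?thesis
      using l expectation_walk_prod_exp_min_le[OF tail, of l]
      by (intro order.trans[OF prob_walk_sum_ge_le] mult_left_mono) auto
  qed
  also have "exp (- (c * real l)) * (exp 20 + 2) ^ l \<le> exp (- 3 * real l)"
    using exp_mult_pow_le[OF c, of "exp 20 + 2" l] by simp
  finally show ?thesis using long_walk_num[OF l] by simp
qed

end

theorem lemma5:
  fixes n d l :: nat and a :: "nat \<Rightarrow> nat \<Rightarrow> nat" and lam :: real and f :: "nat \<Rightarrow> real"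
  assumes "n > 0"
    and "expander n a d lam"
    and "l \<ge> 1"
    and "\<forall>v<n. f v \<ge> 0"
    and "\<forall>x::real. x \<ge> 20 \<longrightarrow>
           measure_pmf.prob (pmf_of_set {..<n}) {v. f v \<ge> x} \<le> exp (- x * (ln x) ^ 3)"
    and "lam \<le> exp (- real l * (ln (real l)) ^ 3)"
  shows "measure_pmf.prob (walk_pmf n a d l)
           {w. (\<Sum>i<l. f (w ! i)) \<ge> (exp 2 + exp 3 + (exp 1 - 1)) * real l} \<le> exp (- real l)"
proof -
  have "regular_multigraph n d a"
    using assms(1,2) by unfold_locales (simp_all add: expander_def)
  then interpret spectral_expander n d a "max lam 0"
    using assms(2) by (rule regular_multigraph.spectral_expander_max)
  have tail: "superexp_tail f" using assms(5) unfolding superexp_tail_def .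
  note C = exp_2_plus_exp_3_plus_e_minus_1_ge_24
  show ?thesis
  proof (cases "l < 20")
    case True
    then show ?thesis using prob_walk_sum_ge_short[OF tail assms(3) True] C by simp
  next
    case False
    then show ?thesis using prob_walk_sum_ge_long[OF tail _ _ C] assms(6) by simp
  qed
qed

end
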